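(* For every integer $k\ge 0$, \[ a_{k,n}=\operatorname{rk}H^{2k}(\overline{\mathcal M}_{0,n},\mathbb Q)\sim \frac{(k+1)^{k+n-1}}{(k+1)!}\quad\text{as } n\to\infty, \] i.e. the ratio of the two sides tends to $1$.
   Context: For $n\ge 3$, let $\overline{\mathcal M}_{0,n}$ be the moduli space of stable $n$-pointed rational curves over $\mathbb C$. Its class in $K(\mathrm{Var}_{\mathbb C})$ equals $P_n(\mathbb L)$ with $\mathbb L=[\mathbb A^1]$ and $P_n(t)=\sum_{k=0}^{n-3}a_{k,n}t^k\in\mathbb Z[t]$; $a_{k,n}=\operatorname{rk}H^{2k}(\overline{\mathcal M}_{0,n},\mathbb Q)$. Equivalently, $P_3(t)=1$ and for $n>3$, $P_n(t)=P_{n-1}(t)(1+t)+t\sum_{i=3}^{n-2}\binom{n-2}{i-1}P_i(t)P_{n+1-i}(t)$. *)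

theory Defs
  imports Complex_Main "HOL-Computational_Algebra.Polynomial" "HOL-Library.Landau_Symbols"
begin

text \<open>The Poincare polynomial P_n of the moduli space of stable n-pointed rational curves,
  given by Keel's recursion: P_3 = 1 and for n > 3
  P_n = P_(n-1) (1+t) + t * sum_(i=3)^(n-2) binom(n-2,i-1) P_i P_(n+1-i).
  Values for n < 3 are irrelevant (set to 1).\<close>
function M0n_poly :: "nat \<Rightarrow> int poly" where
  "M0n_poly n = (if n \<le> 3 then 1 else
     M0n_poly (n - 1) * [:1, 1:] +
     [:0, 1:] * (\<Sum>i\<in>{3..n-2}. of_int (int ((n - 2) choose (i - 1))) * M0n_poly i * M0n_poly (n + 1 - i)))"
  by auto
termination
  by (relation "measure id") auto

definition a_coeff :: "nat \<Rightarrow> nat \<Rightarrow> int" where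
  "a_coeff k n = coeff (M0n_poly n) k"

end

theory Submission
  imports Defs "HOL-Real_Asymp.Real_Asymp"
begin

text \<open>Write \<open>x k n = a_coeff k n / (k + 1)^n\<close>; we show \<open>x k n \<longrightarrow> c k = (k + 1)^(k - 1) / (k + 1)!\<close>
  by induction on \<open>k\<close>. Reading Keel's recursion at the coefficient of \<open>t^(k + 1)\<close> and dividing by
  \<open>(k + 2)^n\<close> gives an affine recurrence \<open>x (k + 1) (n + 1) = x (k + 1) n / (k + 2) + f n\<close>, whose
  forcing term \<open>f\<close> is, up to a geometrically small term, a combination of binomial convolutions
  \<open>\<Sum>s. (N choose s) p^s (1 - p)^(N - s) x j (s + 1) x (k - j) (N - s + 2)\<close> with \<open>p = (j + 1) / (k + 2)\<close>.
  Under the binomial weight both \<open>s\<close> and \<open>N - s\<close> escape to infinity, so these converge to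
  \<open>c j c (k - j)\<close>, and the contracting recurrence makes \<open>x (k + 1)\<close> converge as well. That its limit
  is \<open>c (k + 1)\<close> is Abel's identity \<open>\<Sum>a. (n choose a) a^(a - 1) (n - a)^(n - a) = n^n\<close>.\<close>

section \<open>Abel's identity\<close>

lemma choose_mult_choose_diff:
  assumes "a \<le> n"
  shows "(n choose a) * ((n - a) choose m) = (n choose m) * ((n - m) choose a)"
proof (cases "a + m \<le> n")
  case True
  have "(n choose (n - a)) * ((n - a) choose m) = (n choose m) * ((n - m) choose (n - a - m))"
    using choose_mult[of m "n - a" n] True by simp
  moreover have "n choose (n - a) = n choose a"
    using assms binomial_symmetric[of a n] by simp
  moreover have "(n - m) choose (n - a - m) = (n - m) choose a"
    using True binomial_symmetric[of a "n - m"] by (simp add: diff_diff_left add.commute)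
  ultimately show ?thesis by simp
next
  case False
  then show ?thesis using assms by (auto simp: binomial_eq_0)
qed

lemma alternating_sum_choose_Suc:
  fixes h :: "nat \<Rightarrow> 'a::comm_ring_1"
  shows "(\<Sum>a\<le>Suc r. (-1)^a * of_nat (Suc r choose a) * h a)
       = (\<Sum>a\<le>r. (-1)^a * of_nat (r choose a) * (h a - h (Suc a)))"
proof -
  have pascal: "(-1)^Suc a * of_nat (Suc r choose Suc a) * h (Suc a)
      = - ((-1)^a * of_nat (r choose a) * h (Suc a)) - (-1)^a * of_nat (r choose Suc a) * h (Suc a)" for a
    by (simp add: algebra_simps)
  have "(\<Sum>a\<le>Suc r. (-1)^a * of_nat (Suc r choose a) * h a)
      = (h 0 - (\<Sum>a\<le>r. (-1)^a * of_nat (r choose Suc a) * h (Suc a)))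
        - (\<Sum>a\<le>r. (-1)^a * of_nat (r choose a) * h (Suc a))"
    unfolding sum.atMost_Suc_shift[of _ r] pascal sum_subtractf sum_negf by simp
  also have "h 0 - (\<Sum>a\<le>r. (-1)^a * of_nat (r choose Suc a) * h (Suc a))
      = (\<Sum>a\<le>Suc r. (-1)^a * of_nat (r choose a) * h a)"
    unfolding sum.atMost_Suc_shift[of _ r] by (simp add: sum_negf)
  also have "\<dots> = (\<Sum>a\<le>r. (-1)^a * of_nat (r choose a) * h a)"
    by (simp add: binomial_eq_0)
  finally show ?thesis
    by (simp add: sum_subtractf right_diff_distrib)
qed

lemma alternating_sum_choose_power_eq_0:
  fixes x :: "'a::comm_ring_1"
  shows "d < r \<Longrightarrow> (\<Sum>a\<le>r. (-1)^a * of_nat (r choose a) * (x + of_nat a)^d) = 0"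
proof (induction r arbitrary: d x)
  case 0
  then show ?case by simp
next
  case (Suc r)
  have diff: "(x + of_nat a)^d - (x + of_nat (Suc a))^d
      = - (\<Sum>e<d. of_nat (d choose e) * (x + of_nat a)^e)" for a
  proof -
    have "(x + of_nat (Suc a))^d = (\<Sum>e\<le>d. of_nat (d choose e) * (x + of_nat a)^e)"
      using binomial_ring[of "x + of_nat a" 1 d] by (simp add: algebra_simps)
    then show ?thesis
      by (simp add: lessThan_Suc_atMost[symmetric])
  qed
  have "(\<Sum>a\<le>Suc r. (-1)^a * of_nat (Suc r choose a) * (x + of_nat a)^d)
      = - (\<Sum>e<d. of_nat (d choose e) * (\<Sum>a\<le>r. (-1)^a * of_nat (r choose a) * (x + of_nat a)^e))"
    unfolding alternating_sum_choose_Suc diff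
    by (simp add: sum_distrib_left sum_negf[symmetric] sum.swap[of _ "{..<d}"] algebra_simps)
  also have "\<dots> = 0"
    using Suc by simp
  finally show ?case .
qed

lemma sum_alternating_choose_power_pred:
  assumes "r \<le> n"
  shows "(\<Sum>a=1..n. (-1)^(r - a) * of_nat (r choose a) * of_nat a^(r - 1)) = (if r = 1 then 1 else (0::'a::comm_ring_1))"
proof -
  have "(\<Sum>a=1..n. (-1)^(r - a) * of_nat (r choose a) * of_nat a^(r - 1))
      = (\<Sum>a=1..r. (-1)^(r - a) * of_nat (r choose a) * (of_nat a::'a)^(r - 1))"
    by (rule sum.mono_neutral_right) (use assms in \<open>auto simp: binomial_eq_0\<close>)
  also have "\<dots> = (if r = 1 then 1 else 0)"
  proof -
    consider "r = 0" | "r = 1" | "r \<ge> 2" by linarith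
    then show ?thesis
    proof cases
      case 3
      have "(\<Sum>a=1..r. (-1)^(r - a) * of_nat (r choose a) * of_nat a^(r - 1))
          = (\<Sum>a\<le>r. (-1)^(r - a) * of_nat (r choose a) * (of_nat a::'a)^(r - 1))"
        using 3 by (simp add: atMost_atLeast0 sum.atLeast_Suc_atMost power_0_left)
      also have "\<dots> = (-1)^r * (\<Sum>a\<le>r. (-1)^a * of_nat (r choose a) * (0 + of_nat a)^(r - 1))"
        unfolding sum_distrib_left
      proof (rule sum.cong[OF refl])
        fix a assume "a \<in> {..r}"
        then have sign: "(-1::'a)^(r - a) = (-1)^r * (-1)^a"
          by (simp add: power_add flip: neg_one_power_add_eq_neg_one_power_diff)
        show "(-1)^(r - a) * of_nat (r choose a) * (of_nat a::'a)^(r - 1)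
            = (-1)^r * ((-1)^a * of_nat (r choose a) * (0 + of_nat a)^(r - 1))"
          unfolding sign by (simp add: mult.assoc)
      qed
      also have "\<dots> = 0"
      proof -
        have "(\<Sum>a\<le>r. (-1)^a * of_nat (r choose a) * (0 + of_nat a)^(r - 1)) = (0::'a)"
          by (rule alternating_sum_choose_power_eq_0) (use 3 in simp)
        then show ?thesis by (simp only: mult_zero_right)
      qed
      finally show ?thesis using 3 by simp
    qed auto
  qed
  finally show ?thesis .
qed

lemma power_diff_expansion:
  assumes "1 \<le> a" "a \<le> n"
  shows "of_nat a^(a - 1) * of_nat (n - a)^(n - a)
    = (\<Sum>m\<le>n. of_nat ((n - a) choose m) * of_nat n^m * ((-1)^(n - m - a) * (of_nat a :: 'a::comm_ring_1)^(n - m - 1)))"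
proof -
  have "of_nat a^(a - 1) * of_nat (n - a)^(n - a)
      = (\<Sum>m\<le>n - a. of_nat ((n - a) choose m) * of_nat n^m * (of_nat a^(a - 1) * (- (of_nat a :: 'a))^(n - a - m)))"
    using binomial_ring[of "of_nat n" "- of_nat a :: 'a" "n - a"] assms
    by (simp add: of_nat_diff sum_distrib_left algebra_simps)
  also have "\<dots> = (\<Sum>m\<le>n - a. of_nat ((n - a) choose m) * of_nat n^m * ((-1)^(n - m - a) * (of_nat a :: 'a)^(n - m - 1)))"
  proof (rule sum.cong[OF refl])
    fix m assume "m \<in> {..n - a}"
    then have exps: "a - 1 + (n - m - a) = n - m - 1" "n - a - m = n - m - a"
      using assms by auto
    have "(of_nat a :: 'a)^(a - 1) * (- of_nat a)^(n - a - m)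
        = (-1)^(n - a - m) * (of_nat a^(a - 1) * of_nat a^(n - a - m))"
      by (simp add: power_minus[of "of_nat a"] mult.left_commute)
    also have "\<dots> = (-1)^(n - m - a) * of_nat a^(n - m - 1)"
      by (simp only: exps flip: power_add)
    finally show "of_nat ((n - a) choose m) * of_nat n^m * (of_nat a^(a - 1) * (- (of_nat a :: 'a))^(n - a - m))
        = of_nat ((n - a) choose m) * of_nat n^m * ((-1)^(n - m - a) * of_nat a^(n - m - 1))"
      by (simp only:)
  qed
  also have "\<dots> = (\<Sum>m\<le>n. of_nat ((n - a) choose m) * of_nat n^m * ((-1)^(n - m - a) * (of_nat a :: 'a)^(n - m - 1)))"
    by (rule sum.mono_neutral_left) (auto simp: binomial_eq_0)
  finally show ?thesis .
qed

text \<open>Expand \<open>(n - a)^(n - a)\<close> binomially in \<open>n\<close> and \<open>-a\<close> and sum over \<open>a\<close> first: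
  the inner sums are finite differences of low-degree polynomials, and all but one vanish.\<close>
lemma abel_identity:
  assumes "1 \<le> n"
  shows "(\<Sum>a=1..n. of_nat (n choose a) * of_nat a^(a - 1) * of_nat (n - a)^(n - a)) = (of_nat n ^ n :: 'a::comm_ring_1)"
proof -
  have "(\<Sum>a=1..n. of_nat (n choose a) * of_nat a^(a - 1) * of_nat (n - a)^(n - a))
      = (\<Sum>a=1..n. \<Sum>m\<le>n. of_nat (n choose a) * (of_nat ((n - a) choose m) * of_nat n^m * ((-1)^(n - m - a) * (of_nat a :: 'a)^(n - m - 1))))"
  proof (rule sum.cong[OF refl])
    fix a assume "a \<in> {1..n}"
    then have "1 \<le> a" "a \<le> n" by auto
    then show "of_nat (n choose a) * of_nat a^(a - 1) * of_nat (n - a)^(n - a)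
      = (\<Sum>m\<le>n. of_nat (n choose a) * (of_nat ((n - a) choose m) * of_nat n^m * ((-1)^(n - m - a) * (of_nat a :: 'a)^(n - m - 1))))"
      by (simp only: mult.assoc power_diff_expansion sum_distrib_left)
  qed
  also have "\<dots> = (\<Sum>m\<le>n. of_nat (n choose m) * of_nat n^m *
      (\<Sum>a=1..n. (-1)^(n - m - a) * of_nat ((n - m) choose a) * (of_nat a :: 'a)^(n - m - 1)))"
    unfolding sum.swap[of _ "{1..n}"] sum_distrib_left
  proof (intro sum.cong refl)
    fix m a assume "a \<in> {1..n}"
    then have "of_nat (n choose a) * of_nat ((n - a) choose m) = (of_nat (n choose m) * of_nat ((n - m) choose a) :: 'a)"
      using choose_mult_choose_diff[of a n m] by (simp flip: of_nat_mult)
    then have "of_nat (n choose a) * (of_nat ((n - a) choose m) * of_nat n^m * ((-1)^(n - m - a) * (of_nat a :: 'a)^(n - m - 1)))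
      = (of_nat (n choose m) * of_nat ((n - m) choose a)) * (of_nat n^m * ((-1)^(n - m - a) * of_nat a^(n - m - 1)))"
      by (simp only: mult.assoc flip: mult.assoc[of "of_nat (n choose a)"])
    then show "of_nat (n choose a) * (of_nat ((n - a) choose m) * of_nat n^m * ((-1)^(n - m - a) * (of_nat a :: 'a)^(n - m - 1)))
      = of_nat (n choose m) * of_nat n^m * ((-1)^(n - m - a) * of_nat ((n - m) choose a) * of_nat a^(n - m - 1))"
      by (simp only: mult_ac)
  qed
  also have "\<dots> = (\<Sum>m\<le>n. of_nat (n choose m) * of_nat n^m * (if n - m = 1 then 1 else 0))"
    by (intro sum.cong refl) (simp only: sum_alternating_choose_power_pred diff_le_self)
  also have "\<dots> = (\<Sum>m\<le>n. if m = n - 1 then of_nat (n choose m) * of_nat n^m else 0)"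
    using assms by (intro sum.cong) auto
  also have "\<dots> = of_nat n * of_nat n^(n - 1)"
    using assms binomial_symmetric[of 1 n] by (simp add: sum.delta')
  also have "\<dots> = of_nat n ^ n"
    using assms by (simp flip: power_Suc)
  finally show ?thesis .
qed

lemma abel_identity_shifted:
  "(\<Sum>j\<le>k. real (Suc (Suc k) choose Suc j) * (real j + 1)^j * (real (k - j) + 1)^Suc (k - j))
    = (real k + 2)^Suc (Suc k) - (real k + 2)^Suc k"
proof -
  define f where "f a = real (Suc (Suc k) choose a) * real a^(a - 1) * real (Suc (Suc k) - a)^(Suc (Suc k) - a)" for a
  have "real (Suc (Suc k))^Suc (Suc k) = (\<Sum>a=1..Suc (Suc k). f a)"
    unfolding f_def by (rule abel_identity[symmetric]) simp
  also have "\<dots> = (\<Sum>a=Suc 0..Suc k. f a) + f (Suc (Suc k))"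
    by (subst sum.cl_ivl_Suc) simp
  also have "(\<Sum>a=Suc 0..Suc k. f a) = (\<Sum>j\<le>k. f (Suc j))"
    by (simp only: sum.shift_bounds_cl_Suc_ivl atMost_atLeast0)
  also have "f (Suc (Suc k)) = (real k + 2)^Suc k"
    by (simp add: f_def add.commute)
  finally have "(\<Sum>j\<le>k. f (Suc j)) = (real k + 2)^Suc (Suc k) - (real k + 2)^Suc k"
    by (simp add: add.commute)
  moreover have "f (Suc j) = real (Suc (Suc k) choose Suc j) * (real j + 1)^j * (real (k - j) + 1)^Suc (k - j)"
    if "j \<le> k" for j
    using that by (simp add: f_def Suc_diff_le add.commute)
  ultimately show ?thesis
    by simp
qed

section \<open>Binomial averages and affine recurrences\<close>

definition binomial_weight :: "real \<Rightarrow> nat \<Rightarrow> nat \<Rightarrow> real" where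
  "binomial_weight p N s = real (N choose s) * p^s * (1 - p)^(N - s)"

lemma binomial_weight_nonneg: "0 \<le> p \<Longrightarrow> p \<le> 1 \<Longrightarrow> 0 \<le> binomial_weight p N s"
  by (simp add: binomial_weight_def)

lemma sum_binomial_weight: "(\<Sum>s\<le>N. binomial_weight p N s) = 1"
  using binomial_ring[of p "1 - p" N] by (simp add: binomial_weight_def mult_ac)

lemma binomial_weight_reflect:
  "s \<le> N \<Longrightarrow> binomial_weight p N (N - s) = binomial_weight (1 - p) N s"
  by (simp add: binomial_weight_def binomial_symmetric[symmetric] mult_ac)

lemma binomial_weight_tendsto_0:
  assumes "0 < p" "p < 1"
  shows "(\<lambda>N. binomial_weight p N s) \<longlonglongrightarrow> 0"
proof (rule tendsto_sandwich[of "\<lambda>_. 0" _ _ "\<lambda>N. (p / (1 - p))^s * real N ^ s * (1 - p)^N"])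
  show "\<forall>\<^sub>F N in sequentially. 0 \<le> binomial_weight p N s"
    using assms by (simp add: binomial_weight_nonneg)
  show "\<forall>\<^sub>F N in sequentially. binomial_weight p N s \<le> (p / (1 - p))^s * real N ^ s * (1 - p)^N"
  proof (rule eventually_sequentiallyI)
    fix N assume N: "s \<le> N"
    have "real (N choose s) \<le> real N ^ s"
      using binomial_le_pow[OF N] by (metis of_nat_le_iff of_nat_power)
    then have "real (N choose s) * (p^s * (1 - p)^(N - s)) \<le> real N ^ s * (p^s * (1 - p)^(N - s))"
      using assms by (intro mult_right_mono) auto
    moreover have "(1 - p)^(N - s) = (1 - p)^N / (1 - p)^s"
      using power_diff[of "1 - p" s N] N assms by simp
    ultimately show "binomial_weight p N s \<le> (p / (1 - p))^s * real N ^ s * (1 - p)^N"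
      by (simp add: binomial_weight_def power_divide mult_ac)
  qed
  show "(\<lambda>N. (p / (1 - p))^s * real N ^ s * (1 - p)^N) \<longlonglongrightarrow> 0"
    using assms by real_asymp
qed simp

text \<open>The weight of every fixed initial segment tends to \<open>0\<close>, while \<open>u\<close> is bounded.\<close>
lemma binomial_average_tendsto_0:
  assumes p: "0 < p" "p < 1" and u: "u \<longlonglongrightarrow> 0"
  shows "(\<lambda>N. \<Sum>s\<le>N. binomial_weight p N s * u s) \<longlonglongrightarrow> 0"
proof (rule LIMSEQ_I)
  fix e :: real assume e: "0 < e"
  have w0: "0 \<le> binomial_weight p N s" for N s
    using p by (simp add: binomial_weight_nonneg)
  obtain U where U: "0 < U" "\<And>s. norm (u s) \<le> U"
    using u by (metis BseqE convergent_def convergent_imp_Bseq)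
  obtain M where M: "\<And>s. s \<ge> M \<Longrightarrow> norm (u s) < e / 2"
    using LIMSEQ_D[OF u, of "e / 2"] e by auto
  have "(\<lambda>N. \<Sum>s<M. binomial_weight p N s) \<longlonglongrightarrow> 0"
    by (intro tendsto_null_sum binomial_weight_tendsto_0 p)
  then obtain N0 where N0: "\<And>N. N \<ge> N0 \<Longrightarrow> (\<Sum>s<M. binomial_weight p N s) < e / (2 * U)"
    using LIMSEQ_D[of _ 0 "e / (2 * U)"] e U by (fastforce simp: sum_nonneg w0)
  show "\<exists>N0. \<forall>N\<ge>N0. norm ((\<Sum>s\<le>N. binomial_weight p N s * u s) - 0) < e"
  proof (intro exI allI impI)
    fix N assume N: "N \<ge> N0"
    have bound: "norm (u s) \<le> (if s < M then U else 0) + e / 2" for s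
      using U M[of s] e by (cases "s < M") (auto intro: order_trans[of _ U])
    have "norm (\<Sum>s\<le>N. binomial_weight p N s * u s) \<le> (\<Sum>s\<le>N. binomial_weight p N s * norm (u s))"
      by (rule order_trans[OF norm_sum]) (simp add: abs_mult w0)
    also have "\<dots> \<le> (\<Sum>s\<le>N. binomial_weight p N s * ((if s < M then U else 0) + e / 2))"
      by (intro sum_mono mult_left_mono bound w0)
    also have "\<dots> = U * (\<Sum>s\<in>{..N} \<inter> {..<M}. binomial_weight p N s) + e / 2"
    proof -
      have "binomial_weight p N s * ((if s < M then U else 0) + e / 2)
          = U * (if s \<in> {..<M} then binomial_weight p N s else 0) + e / 2 * binomial_weight p N s" for s
        by (simp add: algebra_simps)
      then show ?thesis
        by (simp only: sum.distrib flip: sum_distrib_left sum.inter_restrict[OF finite_atMost])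
          (simp add: sum_binomial_weight)
    qed
    also have "(\<Sum>s\<in>{..N} \<inter> {..<M}. binomial_weight p N s) \<le> (\<Sum>s<M. binomial_weight p N s)"
      by (rule sum_mono2) (auto simp: w0)
    also have "(\<Sum>s<M. binomial_weight p N s) < e / (2 * U)"
      using N0[OF N] .
    finally show "norm ((\<Sum>s\<le>N. binomial_weight p N s * u s) - 0) < e"
      using U by (simp add: mult_strict_left_mono)
  qed
qed

lemma sum_binomial_weight_reflect:
  "(\<Sum>s\<le>N. binomial_weight p N s * v (N - s)) = (\<Sum>s\<le>N. binomial_weight (1 - p) N s * v s)"
  by (rule sum.reindex_bij_witness[where i="\<lambda>s. N - s" and j="\<lambda>s. N - s"])
    (auto simp: binomial_weight_reflect)

lemma abs_mult_diff_mult_le: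
  fixes x y A B G :: real
  assumes "\<bar>y\<bar> \<le> G"
  shows "\<bar>x * y - A * B\<bar> \<le> G * \<bar>x - A\<bar> + \<bar>A\<bar> * \<bar>y - B\<bar>"
proof -
  have "\<bar>x * y - A * B\<bar> = \<bar>(x - A) * y + A * (y - B)\<bar>"
    by (simp add: algebra_simps)
  also have "\<dots> \<le> \<bar>x - A\<bar> * \<bar>y\<bar> + \<bar>A\<bar> * \<bar>y - B\<bar>"
    by (metis abs_mult abs_triangle_ineq)
  also have "\<dots> \<le> G * \<bar>x - A\<bar> + \<bar>A\<bar> * \<bar>y - B\<bar>"
    using mult_left_mono[OF assms, of "\<bar>x - A\<bar>"] by (simp add: mult.commute)
  finally show ?thesis .
qed

text \<open>Both \<open>s\<close> and \<open>N - s\<close> tend to infinity under the binomial weight, so the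
  convolution sees only the limits of \<open>f\<close> and \<open>g\<close>.\<close>
lemma binomial_convolution_tendsto:
  assumes p: "0 < p" "p < 1" and f: "f \<longlonglongrightarrow> A" and g: "g \<longlonglongrightarrow> B"
  shows "(\<lambda>N. \<Sum>s\<le>N. binomial_weight p N s * (f s * g (N - s))) \<longlonglongrightarrow> A * B"
proof -
  obtain G where G: "\<And>s. \<bar>g s\<bar> \<le> G"
    using g by (metis BseqE convergent_def convergent_imp_Bseq real_norm_def)
  have w0: "0 \<le> binomial_weight p N s" for N s
    using p by (simp add: binomial_weight_nonneg)
  have "(\<lambda>N. \<Sum>s\<le>N. binomial_weight p N s * \<bar>f s - A\<bar>) \<longlonglongrightarrow> 0"
    using f by (intro binomial_average_tendsto_0 p) (simp add: LIM_zero tendsto_rabs_zero)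
  moreover have "(\<lambda>N. \<Sum>s\<le>N. binomial_weight (1 - p) N s * \<bar>g s - B\<bar>) \<longlonglongrightarrow> 0"
    using g p by (intro binomial_average_tendsto_0) (simp_all add: LIM_zero tendsto_rabs_zero)
  then have "(\<lambda>N. \<Sum>s\<le>N. binomial_weight p N s * \<bar>g (N - s) - B\<bar>) \<longlonglongrightarrow> 0"
    using sum_binomial_weight_reflect[of p _ "\<lambda>x. \<bar>g x - B\<bar>"] by simp
  ultimately have bound_null: "(\<lambda>N. G * (\<Sum>s\<le>N. binomial_weight p N s * \<bar>f s - A\<bar>)
      + \<bar>A\<bar> * (\<Sum>s\<le>N. binomial_weight p N s * \<bar>g (N - s) - B\<bar>)) \<longlonglongrightarrow> 0"
    by (auto intro: tendsto_add_zero tendsto_mult_right_zero)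
  have bound: "\<bar>(\<Sum>s\<le>N. binomial_weight p N s * (f s * g (N - s))) - A * B\<bar>
      \<le> G * (\<Sum>s\<le>N. binomial_weight p N s * \<bar>f s - A\<bar>)
        + \<bar>A\<bar> * (\<Sum>s\<le>N. binomial_weight p N s * \<bar>g (N - s) - B\<bar>)" for N
  proof -
    have "\<bar>f s * g (N - s) - A * B\<bar> \<le> G * \<bar>f s - A\<bar> + \<bar>A\<bar> * \<bar>g (N - s) - B\<bar>" for s
      using G by (rule abs_mult_diff_mult_le)
    then have "\<bar>\<Sum>s\<le>N. binomial_weight p N s * (f s * g (N - s) - A * B)\<bar>
        \<le> (\<Sum>s\<le>N. binomial_weight p N s * (G * \<bar>f s - A\<bar> + \<bar>A\<bar> * \<bar>g (N - s) - B\<bar>))"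
      by (intro order_trans[OF sum_abs] sum_mono) (simp add: abs_mult w0 mult_left_mono)
    moreover have "(\<Sum>s\<le>N. binomial_weight p N s * (f s * g (N - s) - A * B))
        = (\<Sum>s\<le>N. binomial_weight p N s * (f s * g (N - s))) - A * B"
      by (simp only: right_diff_distrib sum_subtractf sum_binomial_weight mult_1_left
          flip: sum_distrib_right)
    moreover have "(\<Sum>s\<le>N. binomial_weight p N s * (G * \<bar>f s - A\<bar> + \<bar>A\<bar> * \<bar>g (N - s) - B\<bar>))
        = G * (\<Sum>s\<le>N. binomial_weight p N s * \<bar>f s - A\<bar>)
          + \<bar>A\<bar> * (\<Sum>s\<le>N. binomial_weight p N s * \<bar>g (N - s) - B\<bar>)"
      by (simp add: distrib_left sum.distrib sum_distrib_left mult_ac)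
    ultimately show ?thesis
      by simp
  qed
  have "(\<lambda>N. (\<Sum>s\<le>N. binomial_weight p N s * (f s * g (N - s))) - A * B) \<longlonglongrightarrow> 0"
    using bound by (intro tendsto_0_le[OF bound_null, where K=1] always_eventually allI)
      (simp, meson abs_ge_self order_trans)
  then show ?thesis
    by (rule LIM_zero_cancel)
qed

lemma tendsto_affine_recurrence:
  fixes x t :: "nat \<Rightarrow> real"
  assumes r: "0 \<le> r" "r < 1" and rec: "\<And>n. x (Suc n) = r * x n + t n" and t: "t \<longlonglongrightarrow> T"
  shows "x \<longlonglongrightarrow> T / (1 - r)"
proof (rule LIMSEQ_I)
  fix e :: real assume e: "0 < e"
  define y where "y n = x n - T / (1 - r)" for n
  have y_rec: "y (Suc n) = r * y n + (t n - T)" for n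
    using r by (simp add: y_def rec field_simps)
  obtain N0 where N0: "\<And>n. n \<ge> N0 \<Longrightarrow> \<bar>t n - T\<bar> < e * (1 - r) / 2"
    using LIMSEQ_D[OF t, of "e * (1 - r) / 2"] e r by auto
  have contract: "\<bar>y (N0 + m)\<bar> \<le> r^m * \<bar>y N0\<bar> + e / 2" for m
  proof (induction m)
    case 0
    then show ?case using e by simp
  next
    case (Suc m)
    have "\<bar>y (N0 + Suc m)\<bar> \<le> r * \<bar>y (N0 + m)\<bar> + \<bar>t (N0 + m) - T\<bar>"
      using y_rec[of "N0 + m"] r by (simp add: abs_mult order_trans[OF abs_triangle_ineq])
    also have "\<dots> \<le> r * (r^m * \<bar>y N0\<bar> + e / 2) + e * (1 - r) / 2"
      using Suc N0[of "N0 + m"] r by (intro add_mono mult_left_mono) auto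
    also have "\<dots> = r^Suc m * \<bar>y N0\<bar> + e / 2"
      by (simp add: algebra_simps add_divide_distrib diff_divide_distrib)
    finally show ?case .
  qed
  have "(\<lambda>m. r^m * \<bar>y N0\<bar>) \<longlonglongrightarrow> 0"
    using r by (intro tendsto_mult_left_zero LIMSEQ_power_zero) simp
  then obtain M where M: "\<And>m. m \<ge> M \<Longrightarrow> r^m * \<bar>y N0\<bar> < e / 2"
    using LIMSEQ_D[of _ 0 "e / 2"] e r by fastforce
  show "\<exists>N. \<forall>n\<ge>N. norm (x n - T / (1 - r)) < e"
  proof (intro exI allI impI)
    fix n assume n: "n \<ge> N0 + M"
    then have "\<bar>y n\<bar> \<le> r^(n - N0) * \<bar>y N0\<bar> + e / 2"
      using contract[of "n - N0"] by simp
    moreover have "r^(n - N0) * \<bar>y N0\<bar> < e / 2"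
      using M n by simp
    ultimately show "norm (x n - T / (1 - r)) < e"
      by (simp add: y_def)
  qed
qed

lemma LIMSEQ_shift_truncated:
  fixes f :: "nat \<Rightarrow> 'a::{topological_space, zero}"
  assumes "f \<longlonglongrightarrow> L"
  shows "(\<lambda>s. if d \<le> s then f (s + e) else 0) \<longlonglongrightarrow> L"
proof -
  have "(\<lambda>s. f (s + e)) \<longlonglongrightarrow> L"
    using LIMSEQ_ignore_initial_segment[OF assms] .
  moreover have "\<forall>\<^sub>F s in sequentially. f (s + e) = (if d \<le> s then f (s + e) else 0)"
    by (rule eventually_sequentiallyI[of d]) simp
  ultimately show ?thesis
    by (rule Lim_transform_eventually)
qed

section \<open>Asymptotics of the coefficients\<close>

lemma a_coeff_0: "a_coeff 0 n = 1"
proof (induction n rule: less_induct)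
  case (less n)
  then show ?case
    unfolding a_coeff_def
    by (subst M0n_poly.simps) (simp add: coeff_pCons mult.commute[of _ "[:1, 1:]"] del: M0n_poly.simps)
qed

lemma a_coeff_Suc:
  assumes "3 < n"
  shows "a_coeff (Suc k) n = a_coeff (Suc k) (n - 1) + a_coeff k (n - 1)
    + (\<Sum>i\<in>{3..n-2}. int ((n - 2) choose (i - 1)) * (\<Sum>j\<le>k. a_coeff j i * a_coeff (k - j) (n + 1 - i)))"
  using assms unfolding a_coeff_def
  by (subst M0n_poly.simps)
     (simp del: M0n_poly.simps add: coeff_pCons mult.commute[of _ "[:1, 1:]"] coeff_sum
        of_int_poly of_nat_poly coeff_mult mult.assoc)

lemma a_coeff_Suc_binomial_form:
  assumes "2 \<le> N"
  shows "real_of_int (a_coeff (Suc k) (N + 2))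
    = real_of_int (a_coeff (Suc k) (N + 1)) + real_of_int (a_coeff k (N + 1))
      + (\<Sum>s\<le>N. if 2 \<le> s \<and> s < N then real (N choose s) *
           (\<Sum>j\<le>k. real_of_int (a_coeff j (s + 1)) * real_of_int (a_coeff (k - j) (N - s + 2))) else 0)"
proof -
  let ?h = "\<lambda>s. real (N choose s) * (\<Sum>j\<le>k. real_of_int (a_coeff j (s + 1)) * real_of_int (a_coeff (k - j) (N - s + 2)))"
  have "N + 2 - 1 = N + 1" "N + 2 - 2 = N" "N + 2 + 1 = N + 3"
    by simp_all
  then have "real_of_int (a_coeff (Suc k) (N + 2))
      = real_of_int (a_coeff (Suc k) (N + 1)) + real_of_int (a_coeff k (N + 1))
        + (\<Sum>i\<in>{3..N}. real (N choose (i - 1)) *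
             (\<Sum>j\<le>k. real_of_int (a_coeff j i) * real_of_int (a_coeff (k - j) (N + 3 - i))))"
    using a_coeff_Suc[of "N + 2" k] assms
    by (simp only: of_int_add of_int_sum of_int_mult of_int_of_nat_eq)
  also have "(\<Sum>i\<in>{3..N}. real (N choose (i - 1)) *
        (\<Sum>j\<le>k. real_of_int (a_coeff j i) * real_of_int (a_coeff (k - j) (N + 3 - i))))
      = (\<Sum>s\<in>{2..<N}. ?h s)"
  proof -
    have "{3..N} = {Suc 2..<Suc N}" by auto
    moreover have "N + 3 - Suc s = N - s + 2" if "s < N" for s
      using that by simp
    ultimately show ?thesis
      by (simp only: sum.shift_bounds_Suc_ivl) (intro sum.cong; simp)
  qed
  also have "\<dots> = (\<Sum>s\<le>N. if 2 \<le> s \<and> s < N then ?h s else 0)"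
  proof -
    have "{2..<N} = {s\<in>{..N}. 2 \<le> s \<and> s < N}" by auto
    then show ?thesis by (simp only: sum.inter_filter[OF finite_atMost])
  qed
  finally show ?thesis .
qed

definition a_coeff_scaled :: "nat \<Rightarrow> nat \<Rightarrow> real" where
  "a_coeff_scaled k n = real_of_int (a_coeff k n) / (real k + 1) ^ n"

text \<open>The limit is \<open>(k + 1)^(k - 1) / (k + 1)!\<close>; the exponent \<open>k - 1\<close> is realised by a division
  so that \<open>k = 0\<close> is not affected by truncated subtraction.\<close>
definition a_coeff_limit :: "nat \<Rightarrow> real" where
  "a_coeff_limit k = (real k + 1) ^ k / fact (k + 1) / (real k + 1)"

lemma a_coeff_scaled_binomial_summand:
  assumes "j \<le> k" "s \<le> N"
  shows "(if 2 \<le> s \<and> s < N then real (N choose s) *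
          (real_of_int (a_coeff j (s + 1)) * real_of_int (a_coeff (k - j) (N - s + 2))) else 0) / (real k + 2)^(N + 2)
    = (real j + 1) * (real (k - j) + 1)^2 / (real k + 2)^2 * (binomial_weight ((real j + 1) / (real k + 2)) N s *
        ((if 2 \<le> s then a_coeff_scaled j (s + 1) else 0) * (if 1 \<le> N - s then a_coeff_scaled (k - j) (N - s + 2) else 0)))"
proof (cases "2 \<le> s \<and> s < N")
  case True
  define \<alpha> \<beta> where "\<alpha> = real j + 1" and "\<beta> = real (k - j) + 1"
  have pos: "\<alpha> > 0" "\<beta> > 0"
    by (simp_all add: \<alpha>_def \<beta>_def add_pos_nonneg)
  have K: "real k + 2 = \<alpha> + \<beta>"
    using assms(1) by (simp add: \<alpha>_def \<beta>_def of_nat_diff)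
  have weight: "binomial_weight (\<alpha> / (\<alpha> + \<beta>)) N s = real (N choose s) * (\<alpha> / (\<alpha> + \<beta>))^s * (\<beta> / (\<alpha> + \<beta>))^(N - s)"
    using pos by (simp add: binomial_weight_def field_simps)
  have "real_of_int (a_coeff j (s + 1)) = \<alpha>^s * \<alpha> * a_coeff_scaled j (s + 1)"
    "real_of_int (a_coeff (k - j) (N - s + 2)) = \<beta>^(N - s) * (\<beta> * \<beta>) * a_coeff_scaled (k - j) (N - s + 2)"
    using pos by (simp_all add: a_coeff_scaled_def \<alpha>_def \<beta>_def power_add)
  moreover have "(\<alpha> + \<beta>)^(N + 2) = (\<alpha> + \<beta>)^s * (\<alpha> + \<beta>)^(N - s) * ((\<alpha> + \<beta>) * (\<alpha> + \<beta>))"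
    using assms(2) by (simp add: power2_eq_square flip: power_add)
  moreover have "1 \<le> N - s"
    using True by arith
  ultimately show ?thesis
    using True pos unfolding K weight \<alpha>_def[symmetric] \<beta>_def[symmetric]
    by (simp add: power_divide field_simps power2_eq_square)
qed (use assms in auto)

text \<open>With \<open>n = N + 2\<close> and \<open>s = i - 1\<close>, Keel's summation range \<open>3 \<le> i \<le> n - 2\<close> becomes the
  cut-offs \<open>2 \<le> s\<close> and \<open>1 \<le> N - s\<close>, split between the two factors of the convolution.\<close>
definition a_coeff_forcing :: "nat \<Rightarrow> nat \<Rightarrow> real" where
  "a_coeff_forcing k N = a_coeff_scaled k (N + 1) * ((real k + 1) / (real k + 2))^(N + 1) / (real k + 2)
    + (\<Sum>j\<le>k. (real j + 1) * (real (k - j) + 1)^2 / (real k + 2)^2 *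
        (\<Sum>s\<le>N. binomial_weight ((real j + 1) / (real k + 2)) N s *
          ((if 2 \<le> s then a_coeff_scaled j (s + 1) else 0) *
           (if 1 \<le> N - s then a_coeff_scaled (k - j) (N - s + 2) else 0))))"

lemma a_coeff_scaled_Suc_recurrence:
  assumes "2 \<le> N"
  shows "a_coeff_scaled (Suc k) (N + 2) = a_coeff_scaled (Suc k) (N + 1) / (real k + 2) + a_coeff_forcing k N"
proof -
  let ?K = "real k + 2"
  let ?P = "\<lambda>s. 2 \<le> s \<and> s < N"
  let ?a = "\<lambda>j n. real_of_int (a_coeff j n)"
  have K: "real (Suc k) + 1 = ?K" by simp
  have split: "(if ?P s then real (N choose s) * (\<Sum>j\<le>k. ?a j (s + 1) * ?a (k - j) (N - s + 2)) else 0)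
      = (\<Sum>j\<le>k. if ?P s then real (N choose s) * (?a j (s + 1) * ?a (k - j) (N - s + 2)) else 0)" for s
    by (cases "?P s") (auto simp: sum_distrib_left)
  have "a_coeff_scaled (Suc k) (N + 2) = ?a (Suc k) (N + 1) / ?K^(N + 2) + ?a k (N + 1) / ?K^(N + 2)
      + (\<Sum>s\<le>N. if ?P s then real (N choose s) * (\<Sum>j\<le>k. ?a j (s + 1) * ?a (k - j) (N - s + 2)) else 0) / ?K^(N + 2)"
    by (simp only: a_coeff_scaled_def K a_coeff_Suc_binomial_form[OF assms] add_divide_distrib)
  also have "?a (Suc k) (N + 1) / ?K^(N + 2) = a_coeff_scaled (Suc k) (N + 1) / ?K"
    by (simp add: a_coeff_scaled_def add.commute)
  also have "?a k (N + 1) / ?K^(N + 2) = a_coeff_scaled k (N + 1) * ((real k + 1) / ?K)^(N + 1) / ?K"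
    by (simp add: a_coeff_scaled_def power_divide add_pos_nonneg)
  also have "(\<Sum>s\<le>N. if ?P s then real (N choose s) * (\<Sum>j\<le>k. ?a j (s + 1) * ?a (k - j) (N - s + 2)) else 0) / ?K^(N + 2)
      = (\<Sum>j\<le>k. \<Sum>s\<le>N. (if ?P s then real (N choose s) * (?a j (s + 1) * ?a (k - j) (N - s + 2)) else 0) / ?K^(N + 2))"
    unfolding split sum_divide_distrib by (rule sum.swap)
  also have "\<dots> = (\<Sum>j\<le>k. (real j + 1) * (real (k - j) + 1)^2 / ?K^2 *
        (\<Sum>s\<le>N. binomial_weight ((real j + 1) / ?K) N s *
          ((if 2 \<le> s then a_coeff_scaled j (s + 1) else 0) *
           (if 1 \<le> N - s then a_coeff_scaled (k - j) (N - s + 2) else 0))))"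
    unfolding sum_distrib_left by (intro sum.cong refl a_coeff_scaled_binomial_summand) auto
  finally show ?thesis
    unfolding a_coeff_forcing_def add.assoc[symmetric] .
qed

lemma a_coeff_limit_convolution:
  "(\<Sum>j\<le>k. (real j + 1) * (real (k - j) + 1)^2 / (real k + 2)^2 * (a_coeff_limit j * a_coeff_limit (k - j)))
    = a_coeff_limit (Suc k) * (1 - 1 / (real k + 2))"
proof -
  define K where "K = real k + 2"
  have K_pos: "K > 0" by (simp add: K_def)
  have summand: "(real j + 1) * (real (k - j) + 1)^2 / K^2 * (a_coeff_limit j * a_coeff_limit (k - j))
     = real (Suc (Suc k) choose Suc j) * (real j + 1)^j * (real (k - j) + 1)^Suc (k - j) / (fact (Suc (Suc k)) * K^2)"
    if j: "j \<le> k" for j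
  proof -
    have rearrange: "u * v^2 / K^2 * (u^a / F1 / u * (v^b / F2 / v)) = F / (F1 * F2) * u^a * v^Suc b / (F * K^2)"
      if "u > 0" "v > 0" "F1 > 0" "F2 > 0" "F > 0" for u v F1 F2 F :: real and a b :: nat
      using that K_pos by (simp add: field_simps power2_eq_square)
    have "real (Suc (Suc k) choose Suc j) = fact (Suc (Suc k)) / (fact (Suc j) * fact (Suc (k - j)))"
      using binomial_fact[of "Suc j" "Suc (Suc k)"] j by (simp add: Suc_diff_le)
    then show ?thesis
      unfolding a_coeff_limit_def Suc_eq_plus1[symmetric]
      by (simp only: rearrange add_pos_nonneg of_nat_0_le_iff zero_less_one fact_gt_zero)
  qed
  have "(\<Sum>j\<le>k. (real j + 1) * (real (k - j) + 1)^2 / K^2 * (a_coeff_limit j * a_coeff_limit (k - j)))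
      = ((real k + 2)^Suc (Suc k) - (real k + 2)^Suc k) / (fact (Suc (Suc k)) * K^2)"
    unfolding abel_identity_shifted[symmetric] sum_divide_distrib by (intro sum.cong refl summand) simp
  also have "\<dots> = a_coeff_limit (Suc k) * (1 - 1 / K)"
    using K_pos by (simp add: a_coeff_limit_def K_def field_simps power2_eq_square)
  finally show ?thesis
    by (simp only: K_def)
qed

lemma a_coeff_scaled_0: "a_coeff_scaled 0 n = 1"
  by (simp add: a_coeff_scaled_def a_coeff_0)

lemma a_coeff_forcing_tendsto:
  assumes IH: "\<And>j. j \<le> k \<Longrightarrow> a_coeff_scaled j \<longlonglongrightarrow> a_coeff_limit j"
  shows "a_coeff_forcing k \<longlonglongrightarrow> a_coeff_limit (Suc k) * (1 - 1 / (real k + 2))"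
proof -
  let ?K = "real k + 2"
  have convolution: "(\<lambda>N. \<Sum>s\<le>N. binomial_weight ((real j + 1) / ?K) N s *
        ((if 2 \<le> s then a_coeff_scaled j (s + 1) else 0) *
         (if 1 \<le> N - s then a_coeff_scaled (k - j) (N - s + 2) else 0)))
      \<longlonglongrightarrow> a_coeff_limit j * a_coeff_limit (k - j)" if "j \<le> k" for j
  proof (rule binomial_convolution_tendsto[where f="\<lambda>s. if 2 \<le> s then a_coeff_scaled j (s + 1) else 0"
        and g="\<lambda>m. if 1 \<le> m then a_coeff_scaled (k - j) (m + 2) else 0"])
    show "0 < (real j + 1) / ?K" "(real j + 1) / ?K < 1"
      using that by auto
    show "(\<lambda>s. if 2 \<le> s then a_coeff_scaled j (s + 1) else 0) \<longlonglongrightarrow> a_coeff_limit j"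
      using that by (intro LIMSEQ_shift_truncated IH)
    show "(\<lambda>m. if 1 \<le> m then a_coeff_scaled (k - j) (m + 2) else 0) \<longlonglongrightarrow> a_coeff_limit (k - j)"
      by (intro LIMSEQ_shift_truncated IH) simp
  qed
  have "(\<lambda>N. a_coeff_scaled k (N + 1) * ((real k + 1) / ?K)^(N + 1) / ?K) \<longlonglongrightarrow> a_coeff_limit k * 0 / ?K"
    by (intro tendsto_intros LIMSEQ_ignore_initial_segment[OF IH] LIMSEQ_power_zero
        [THEN LIMSEQ_ignore_initial_segment]) auto
  then have "a_coeff_forcing k \<longlonglongrightarrow> 0 + (\<Sum>j\<le>k. (real j + 1) * (real (k - j) + 1)^2 / ?K^2 *
      (a_coeff_limit j * a_coeff_limit (k - j)))"
    unfolding a_coeff_forcing_def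
    by (intro tendsto_add tendsto_sum tendsto_mult tendsto_const convolution) auto
  then show ?thesis
    by (simp only: add_0 a_coeff_limit_convolution)
qed

lemma a_coeff_scaled_Suc_tendsto:
  assumes "\<And>j. j \<le> k \<Longrightarrow> a_coeff_scaled j \<longlonglongrightarrow> a_coeff_limit j"
  shows "a_coeff_scaled (Suc k) \<longlonglongrightarrow> a_coeff_limit (Suc k)"
proof -
  let ?K = "real k + 2"
  have rec: "a_coeff_scaled (Suc k) (Suc m + 3) = (1 / ?K) * a_coeff_scaled (Suc k) (m + 3)
      + a_coeff_forcing k (m + 2)" for m
    using a_coeff_scaled_Suc_recurrence[of "m + 2" k] by (simp add: eval_nat_numeral)
  have forcing: "(\<lambda>m. a_coeff_forcing k (m + 2)) \<longlonglongrightarrow> a_coeff_limit (Suc k) * (1 - 1 / ?K)"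
    using assms by (intro LIMSEQ_ignore_initial_segment a_coeff_forcing_tendsto)
  have "(\<lambda>m. a_coeff_scaled (Suc k) (m + 3)) \<longlonglongrightarrow> a_coeff_limit (Suc k) * (1 - 1 / ?K) / (1 - 1 / ?K)"
    by (rule tendsto_affine_recurrence[where x="\<lambda>m. a_coeff_scaled (Suc k) (m + 3)", OF _ _ rec forcing])
      simp_all
  moreover have nonzero: "1 - 1 / ?K \<noteq> 0"
    by simp
  ultimately have "(\<lambda>m. a_coeff_scaled (Suc k) (m + 3)) \<longlonglongrightarrow> a_coeff_limit (Suc k)"
    by (simp only: nonzero_mult_div_cancel_right[OF nonzero])
  then show ?thesis
    by (rule LIMSEQ_offset)
qed

lemma a_coeff_scaled_tendsto: "a_coeff_scaled k \<longlonglongrightarrow> a_coeff_limit k"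
proof (induction k rule: less_induct)
  case (less k)
  show ?case
  proof (cases k)
    case 0
    then show ?thesis by (simp add: a_coeff_scaled_0 a_coeff_limit_def)
  next
    case (Suc j)
    then show ?thesis using less by (auto intro: a_coeff_scaled_Suc_tendsto)
  qed
qed

lemma a_coeff_scaled_div_limit:
  assumes "1 \<le> n"
  shows "a_coeff_scaled k n / a_coeff_limit k
    = real_of_int (a_coeff k n) / (real (k + 1) ^ (k + n - 1) / fact (k + 1))"
proof -
  have "(real k + 1) ^ (k + n - 1) * (real k + 1) = (real k + 1) ^ n * (real k + 1) ^ k"
    using assms by (simp add: add.commute flip: power_add power_Suc2)
  then have split_power: "(real k + 1) ^ (k + n - 1) = (real k + 1) ^ n * (real k + 1) ^ k / (real k + 1)"
    by (simp add: field_simps add_pos_nonneg)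
  have rearrange: "a / b^n / (b^k / F / b) = a / (b^n * b^k / b / F)" if "b > 0" "F > 0" for a b F :: real
    using that by (simp add: field_simps)
  show ?thesis
    unfolding a_coeff_scaled_def a_coeff_limit_def of_nat_add of_nat_1 split_power
    by (rule rearrange) (simp_all add: add_pos_nonneg)
qed

theorem theorem1p4:
  fixes k :: nat
  shows "(\<lambda>n. real_of_int (a_coeff k n)) \<sim>[sequentially]
           (\<lambda>n. real (k + 1) ^ (k + n - 1) / fact (k + 1))"
proof (rule asymp_equivI')
  have "a_coeff_limit k > 0"
    by (simp add: a_coeff_limit_def add_pos_nonneg)
  then have "(\<lambda>n. a_coeff_scaled k n / a_coeff_limit k) \<longlonglongrightarrow> 1"
    using tendsto_divide[OF a_coeff_scaled_tendsto[of k] tendsto_const, of "a_coeff_limit k"] by simp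
  moreover have "\<forall>\<^sub>F n in sequentially. a_coeff_scaled k n / a_coeff_limit k
      = real_of_int (a_coeff k n) / (real (k + 1) ^ (k + n - 1) / fact (k + 1))"
    by (rule eventually_sequentiallyI) (rule a_coeff_scaled_div_limit)
  ultimately show "((\<lambda>n. real_of_int (a_coeff k n) / (real (k + 1) ^ (k + n - 1) / fact (k + 1))) \<longlongrightarrow> 1) sequentially"
    by (rule Lim_transform_eventually)
qed

end
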